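(* For every fixed $k\in\mathbb{N}$, the values $\tau_{n,k}$ decrease strictly in $n$: $$\tau_{n+1,k}<\tau_{n,k}<\cdots<\tau_{k+3,k}<\tau_{k+2,k}\qquad (n\ge k+2).$$ In particular, for every fixed $k\in\mathbb{N}$ and every $m\ge 2$, $\tau_{n,k}\le\tau_{k+m,k}$ for all $n\ge k+m$.
   Context: $T_n$ denotes the Chebyshev polynomial of the first kind of degree $n$, $T_n(\cos\theta)=\cos n\theta$. For integers $n\ge k+2$, $k\ge 1$, let $\omega_{n,k}$ be the rightmost (largest) zero of $T_n^{(k+1)}$ and define $\tau_{n,k}:=|T_n^{(k)}(\omega_{n,k})|/T_n^{(k)}(1)$. *)

theory Defs
  imports "HOL-Computational_Algebra.Polynomial"
begin

fun cheb_T :: "nat \<Rightarrow> real poly" where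
  "cheb_T 0 = 1"
| "cheb_T (Suc 0) = [:0, 1:]"
| "cheb_T (Suc (Suc n)) = smult 2 ([:0, 1:] * cheb_T (Suc n)) - cheb_T n"

definition cheb_deriv :: "nat \<Rightarrow> nat \<Rightarrow> real poly" where
  "cheb_deriv n k = (pderiv ^^ k) (cheb_T n)"

definition omega :: "nat \<Rightarrow> nat \<Rightarrow> real" where
  "omega n k = Max {x. poly (cheb_deriv n (Suc k)) x = 0}"

definition tau :: "nat \<Rightarrow> nat \<Rightarrow> real" where
  "tau n k = \<bar>poly (cheb_deriv n k) (omega n k)\<bar> / poly (cheb_deriv n k) 1"

end

theory Submission
  imports Defs
begin

text \<open>Fix \<open>k\<close>, let \<open>P = T_n^(k)\<close>, \<open>\<omega> = \<omega>_{n,k}\<close> and \<open>t = -P(\<omega>) > 0\<close>, so that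
  \<open>\<tau>_{n,k} = t / P(1)\<close>, and let \<open>g \<in> (\<omega>, 1)\<close> be a point where \<open>P(g) = g P(\<omega>)\<close>.
  By the Chebyshev ODE, \<open>N P\<^sup>2 + (1 - x\<^sup>2) P'\<^sup>2 - 4 k g P'(g) P\<close> with \<open>N = n\<^sup>2 - k\<^sup>2\<close>
  decreases on \<open>[\<omega>, g]\<close>; comparing its values at the endpoints yields \<open>P'(g) < (n + k) t\<close>.
  Hence \<open>x P' + (n + k) P\<close>, a positive multiple of \<open>T_{n+1}^(k+1)\<close>, changes sign on
  \<open>(g, 1)\<close>, so \<open>\<beta> = \<omega>_{n+1,k} > g\<close>. At \<open>\<beta>\<close> the recurrences relating \<open>T_{n+1}\<close> to
  \<open>T_n\<close> give \<open>\<tau>_{n+1,k} = -P(\<beta>) / (\<beta> P(1))\<close>, and \<open>-P(\<beta>) < -P(g) = g t < \<beta> t\<close>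
  because \<open>P\<close> increases right of \<open>\<omega>\<close>. The argument needs \<open>\<omega>_{n,k} \<ge> 0\<close>, which it
  reproduces for \<open>n + 1\<close>; it holds for \<open>n = k + 2\<close> as \<open>T_{k+2}^(k+1)\<close> is odd.\<close>

abbreviation X :: "real poly" where "X \<equiv> [:0, 1:]"

text \<open>\<open>cheb_U n\<close> is the Chebyshev polynomial of the second kind \<open>U_{n-1}\<close>
  (and \<open>cheb_U 0 = 0\<close>), shifted so that \<open>T_n' = n cheb_U n\<close>.\<close>
fun cheb_U :: "nat \<Rightarrow> real poly" where
  "cheb_U 0 = 0"
| "cheb_U (Suc 0) = 1"
| "cheb_U (Suc (Suc n)) = smult 2 (X * cheb_U (Suc n)) - cheb_U n"

lemma cheb_T_cheb_U:
  "cheb_T (Suc n) = X * cheb_U (Suc n) - cheb_U n"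
  "cheb_T n = cheb_U (Suc n) - X * cheb_U n"
proof -
  have "cheb_T (Suc n) = X * cheb_U (Suc n) - cheb_U n \<and> cheb_T n = cheb_U (Suc n) - X * cheb_U n"
    by (induction n rule: cheb_T.induct)
      (simp_all only: cheb_T.simps cheb_U.simps, auto intro!: poly_ext simp: algebra_simps)
  then show "cheb_T (Suc n) = X * cheb_U (Suc n) - cheb_U n" "cheb_T n = cheb_U (Suc n) - X * cheb_U n"
    by blast+
qed

lemma pderiv_cheb_T: "pderiv (cheb_T n) = smult (real n) (cheb_U n)"
proof (induction n rule: cheb_T.induct)
  case (3 n)
  then show ?case
    using cheb_T_cheb_U(1)[of n]
    by (simp only: cheb_T.simps cheb_U.simps pderiv_diff pderiv_smult pderiv_mult)
      (auto intro!: poly_ext simp: pderiv_pCons algebra_simps)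
qed (simp_all add: pderiv_pCons)

lemma cheb_deriv_0 [simp]: "cheb_deriv n 0 = cheb_T n"
  by (simp add: cheb_deriv_def)

lemma cheb_deriv_Suc: "cheb_deriv n (Suc j) = pderiv (cheb_deriv n j)"
  by (simp add: cheb_deriv_def)

lemma poly_pderiv_X_mult: "poly (pderiv (X * p)) x = poly p x + x * poly (pderiv p) (x :: real)"
  by (simp add: pderiv_mult pderiv_pCons algebra_simps)

lemma poly_pderiv_one_minus_sq_mult:
  "poly (pderiv ([:1, 0, -1:] * p)) x = (1 - x * x) * poly (pderiv p) x - 2 * x * (poly p x :: real)"
  by (simp add: pderiv_add pderiv_smult pderiv_pCons pderiv_minus algebra_simps)

lemma cheb_deriv_shift_deriv:
  "smult (real n) (cheb_deriv (Suc n) (Suc j)) =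
   smult (real n + 1) (X * cheb_deriv n (Suc j) + smult (real n + real j) (cheb_deriv n j))"
proof (induction j)
  case 0
  show ?case
    unfolding cheb_deriv_Suc cheb_deriv_0 pderiv_cheb_T unfolding cheb_T_cheb_U(2)[of n]
    by (intro poly_ext) (simp add: algebra_simps)
next
  case (Suc j)
  have "poly (pderiv (smult (real n) (cheb_deriv (Suc n) (Suc j)))) x =
    poly (pderiv (smult (real n + 1) (X * cheb_deriv n (Suc j) + smult (real n + real j) (cheb_deriv n j)))) x"
    for x using Suc.IH by simp
  then show ?case
    by (intro poly_ext) (simp add: cheb_deriv_Suc[symmetric] pderiv_mult pderiv_smult pderiv_add
        pderiv_pCons algebra_simps)
qed

lemma cheb_deriv_shift:
  "smult (real n * (real n + 1 - real j)) (cheb_deriv (Suc n) j) =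
   smult (real n) (X * cheb_deriv (Suc n) (Suc j)) - smult (real n + 1) (cheb_deriv n (Suc j))"
proof (induction j)
  case 0
  show ?case
    unfolding cheb_deriv_Suc cheb_deriv_0 pderiv_cheb_T unfolding cheb_T_cheb_U(1)[of n]
    by (intro poly_ext) (simp add: algebra_simps)
next
  case (Suc j)
  have "poly (pderiv (smult (real n * (real n + 1 - real j)) (cheb_deriv (Suc n) j))) x =
    poly (pderiv (smult (real n) (X * cheb_deriv (Suc n) (Suc j)) - smult (real n + 1) (cheb_deriv n (Suc j)))) x"
    for x using Suc.IH by simp
  then show ?case
    by (intro poly_ext) (simp add: cheb_deriv_Suc[symmetric] pderiv_mult pderiv_smult pderiv_diff
        pderiv_pCons algebra_simps)
qed

lemma one_minus_sq_mult_pderiv_cheb_T: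
  "[:1, 0, -1:] * pderiv (cheb_T n) = smult (real n) (X * cheb_T n - cheb_T (Suc n))"
  unfolding pderiv_cheb_T unfolding cheb_T_cheb_U
  by (intro poly_ext) (simp add: algebra_simps)

lemma cheb_T_ode:
  "[:1, 0, -1:] * pderiv (pderiv (cheb_T n)) = X * pderiv (cheb_T n) - smult ((real n)\<^sup>2) (cheb_T n)"
proof (intro poly_ext)
  fix x :: real
  define T T' T'' where "T = poly (cheb_T n) x" and "T' = poly (pderiv (cheb_T n)) x"
    and "T'' = poly (pderiv (pderiv (cheb_T n))) x"
  have "(1 - x * x) * T'' - 2 * x * T' = real n * (T + x * T' - poly (pderiv (cheb_T (Suc n))) x)"
    using arg_cong[OF one_minus_sq_mult_pderiv_cheb_T[of n], of "\<lambda>p. poly (pderiv p) x"]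
    unfolding T_def T'_def T''_def
    by (simp only: poly_pderiv_one_minus_sq_mult pderiv_smult pderiv_diff poly_smult poly_diff poly_pderiv_X_mult)
  moreover have "real n * poly (pderiv (cheb_T (Suc n))) x = (real n + 1) * (x * T' + real n * T)"
    using arg_cong[OF cheb_deriv_shift_deriv[of n 0], of "\<lambda>p. poly p x"]
    unfolding T_def T'_def by (simp add: cheb_deriv_Suc algebra_simps)
  ultimately have "real n * ((1 - x * x) * T'' - x * T' + (real n)\<^sup>2 * T) = 0"
    by (simp add: algebra_simps power2_eq_square)
  then have "n = 0 \<or> (1 - x * x) * T'' - x * T' + (real n)\<^sup>2 * T = 0"
    by simp
  moreover have "n = 0 \<Longrightarrow> T' = 0 \<and> T'' = 0"
    unfolding T'_def T''_def by simp
  ultimately have "(1 - x * x) * T'' = x * T' - (real n)\<^sup>2 * T"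
    by auto
  then show "poly ([:1, 0, -1:] * pderiv (pderiv (cheb_T n))) x =
      poly (X * pderiv (cheb_T n) - smult ((real n)\<^sup>2) (cheb_T n)) x"
    unfolding T_def T'_def T''_def by (simp add: algebra_simps)
qed

lemma cheb_deriv_ode:
  "[:1, 0, -1:] * cheb_deriv n (Suc (Suc j)) =
    smult (2 * real j + 1) (X * cheb_deriv n (Suc j)) - smult ((real n)\<^sup>2 - (real j)\<^sup>2) (cheb_deriv n j)"
proof (induction j)
  case 0
  then show ?case using cheb_T_ode by (simp add: cheb_deriv_Suc)
next
  case (Suc j)
  have "poly (pderiv ([:1, 0, -1:] * cheb_deriv n (Suc (Suc j)))) x =
      poly (pderiv (smult (2 * real j + 1) (X * cheb_deriv n (Suc j))
        - smult ((real n)\<^sup>2 - (real j)\<^sup>2) (cheb_deriv n j))) x" for x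
    using Suc.IH by simp
  then have "(1 - x * x) * poly (cheb_deriv n (Suc (Suc (Suc j)))) x
        - 2 * x * poly (cheb_deriv n (Suc (Suc j))) x =
      (2 * real j + 1) * (poly (cheb_deriv n (Suc j)) x + x * poly (cheb_deriv n (Suc (Suc j))) x)
        - ((real n)\<^sup>2 - (real j)\<^sup>2) * poly (cheb_deriv n (Suc j)) x" for x
    by (simp only: poly_pderiv_one_minus_sq_mult pderiv_smult pderiv_diff poly_smult poly_diff
        poly_pderiv_X_mult cheb_deriv_Suc[symmetric])
  then show ?case
    by (intro poly_ext) (simp add: algebra_simps power2_eq_square)
qed

lemma poly_cheb_deriv_ode:
  "(1 - x * x) * poly (cheb_deriv n (Suc (Suc j))) x =
    (2 * real j + 1) * x * poly (cheb_deriv n (Suc j)) x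
      - ((real n)\<^sup>2 - (real j)\<^sup>2) * poly (cheb_deriv n j) x"
  using arg_cong[OF cheb_deriv_ode[of n j], of "\<lambda>p. poly p x"] by (simp add: algebra_simps)

lemma poly_cheb_T_1 [simp]: "poly (cheb_T n) 1 = 1"
  by (induction n rule: cheb_T.induct) simp_all

lemma degree_cheb_T: "degree (cheb_T n) \<le> n"
proof (induction n rule: cheb_T.induct)
  case (3 n)
  have "degree (smult 2 (X * cheb_T (Suc n))) \<le> Suc (Suc n)"
    using degree_mult_le[of X "cheb_T (Suc n)"] degree_smult_le[of 2 "X * cheb_T (Suc n)"] 3(1)
    by simp
  with 3(2) show ?case
    using degree_diff_le[of "smult 2 (X * cheb_T (Suc n))" "Suc (Suc n)" "cheb_T n"] by simp
qed auto

lemma degree_cheb_deriv: "degree (cheb_deriv n j) \<le> n - j"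
  by (induction j) (use degree_cheb_T in \<open>auto simp: cheb_deriv_Suc degree_pderiv\<close>)

lemma cheb_deriv_eq_0: "n < j \<Longrightarrow> cheb_deriv n j = 0"
proof -
  assume "n < j"
  then obtain i where "j = Suc (n + i)"
    using less_imp_Suc_add by blast
  moreover have "cheb_deriv n (Suc (n + i)) = 0" for i
    using degree_cheb_deriv[of n "n + i"] by (simp add: cheb_deriv_Suc pderiv_eq_0_iff)
  ultimately show ?thesis by simp
qed

lemma poly_cheb_deriv_self: "poly (cheb_deriv n n) x = poly (cheb_deriv n n) 1"
proof -
  have "degree (cheb_deriv n n) = 0"
    using degree_cheb_deriv[of n n] by simp
  then obtain a where "cheb_deriv n n = [:a:]"
    using degree0_coeffs by blast
  then show ?thesis by simp
qed

lemma poly_cheb_deriv_1_pos: "j \<le> n \<Longrightarrow> 0 < poly (cheb_deriv n j) 1"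
proof (induction j)
  case (Suc j)
  have "(2 * real j + 1) * poly (cheb_deriv n (Suc j)) 1 =
      ((real n)\<^sup>2 - (real j)\<^sup>2) * poly (cheb_deriv n j) 1"
    using poly_cheb_deriv_ode[of 1 n j] by simp
  moreover have "0 < (real n)\<^sup>2 - (real j)\<^sup>2"
    using Suc.prems by (simp add: power_strict_mono)
  ultimately have "0 < (2 * real j + 1) * poly (cheb_deriv n (Suc j)) 1"
    using Suc by simp
  then show ?case
    by (simp add: zero_less_mult_iff add_pos_nonneg)
qed simp

lemma poly_strict_mono_if_pderiv_pos:
  fixes p :: "real poly"
  assumes "a < b" "\<And>x. a < x \<Longrightarrow> x < b \<Longrightarrow> 0 < poly (pderiv p) x"
  shows "poly p a < poly p b"
proof (rule DERIV_pos_imp_increasing_open[OF assms(1)])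
  show "\<exists>y. DERIV (poly p) x :> y \<and> 0 < y" if "a < x" "x < b" for x
    using assms(2) that poly_DERIV by blast
qed (intro continuous_intros)

lemma poly_mono_if_pderiv_nonneg:
  fixes p :: "real poly"
  assumes "a \<le> b" "\<And>x. a \<le> x \<Longrightarrow> x \<le> b \<Longrightarrow> 0 \<le> poly (pderiv p) x"
  shows "poly p a \<le> poly p b"
  using assms(2) poly_DERIV by (intro DERIV_nonneg_imp_nondecreasing[OF assms(1)]) blast

lemma poly_cheb_deriv_pos: "j \<le> n \<Longrightarrow> 1 \<le> x \<Longrightarrow> 0 < poly (cheb_deriv n j) x"
proof (induction "n - j" arbitrary: j x)
  case 0
  then show ?case
    using poly_cheb_deriv_self[of n x] poly_cheb_deriv_1_pos[of n n] by simp
next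
  case (Suc i)
  have "0 < poly (pderiv (cheb_deriv n j)) y" if "1 \<le> y" for y
    using Suc.hyps(1)[of "Suc j" y] Suc.hyps(2) that by (simp add: cheb_deriv_Suc)
  then have "poly (cheb_deriv n j) 1 \<le> poly (cheb_deriv n j) x"
    using Suc.prems(2) by (intro poly_mono_if_pderiv_nonneg) (auto intro: less_imp_le)
  with poly_cheb_deriv_1_pos[OF Suc.prems(1)] show ?case
    by linarith
qed

text \<open>Inside \<open>(-1, 1)\<close> the ODE propagates a common zero of \<open>T_n^(j)\<close> and \<open>T_n^(j+1)\<close>
  up to the nonzero constant \<open>T_n^(n)\<close>.\<close>
lemma cheb_deriv_no_common_zero:
  assumes "x * x < 1" "j \<le> n"
    and "poly (cheb_deriv n j) x = 0" "poly (cheb_deriv n (Suc j)) x = 0"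
  shows False
proof -
  have "poly (cheb_deriv n (j + i)) x = 0 \<and> poly (cheb_deriv n (Suc (j + i))) x = 0" for i
  proof (induction i)
    case (Suc i)
    then have "(1 - x * x) * poly (cheb_deriv n (Suc (Suc (j + i)))) x = 0"
      using poly_cheb_deriv_ode[of x n "j + i"] by simp
    with Suc assms(1) show ?case by simp
  qed (use assms in simp)
  from this[of "n - j"] assms(2) poly_cheb_deriv_self[of n x] poly_cheb_deriv_1_pos[of n n]
  show False by simp
qed

lemma omega_largest_zero:
  assumes "Suc k \<le> n" "poly (cheb_deriv n (Suc k)) x = 0"
  shows "poly (cheb_deriv n (Suc k)) (omega n k) = 0" "x \<le> omega n k"
proof -
  let ?Z = "{x. poly (cheb_deriv n (Suc k)) x = 0}"
  have "finite ?Z"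
    using poly_cheb_deriv_1_pos[OF assms(1)] by (intro poly_roots_finite) auto
  with assms(2) show "poly (cheb_deriv n (Suc k)) (omega n k) = 0" "x \<le> omega n k"
    unfolding omega_def using Max_in[of ?Z] Max_ge[of ?Z] by auto
qed

lemma poly_cheb_deriv_penultimate_at_0: "poly (cheb_deriv (Suc (Suc j)) (Suc j)) 0 = 0"
proof -
  have "0 = - ((real (Suc (Suc j)))\<^sup>2 - (real (Suc j))\<^sup>2) * poly (cheb_deriv (Suc (Suc j)) (Suc j)) 0"
    using poly_cheb_deriv_ode[of 0 "Suc (Suc j)" "Suc j"] cheb_deriv_eq_0[of "Suc (Suc j)" "Suc (Suc (Suc j))"]
    by simp
  moreover have "(real (Suc (Suc j)))\<^sup>2 - (real (Suc j))\<^sup>2 \<noteq> 0"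
    by (simp add: power2_eq_square algebra_simps)
  ultimately show ?thesis by simp
qed

lemma energy_estimate_imp_less:
  fixes k n g t w :: real
  assumes "0 < k" "k \<le> n" "0 < g" "g < 1" "0 < t"
    and "(1 + g) * w\<^sup>2 - (n\<^sup>2 - k\<^sup>2) * (1 + g) * t\<^sup>2 \<le> 4 * k * g * w * t"
  shows "w < (n + k) * t"
proof (rule ccontr)
  assume "\<not> w < (n + k) * t"
  define d where "d = w - (n + k) * t"
  have d: "0 \<le> d" "w = (n + k) * t + d"
    using \<open>\<not> w < (n + k) * t\<close> unfolding d_def by simp_all
  have "(1 + g) * w\<^sup>2 - (n\<^sup>2 - k\<^sup>2) * (1 + g) * t\<^sup>2 - 4 * k * g * w * t
      = 2 * k * (n + k) * (1 - g) * t * t + d * t * (2 * (1 + g) * (n + k) - 4 * k * g) + (1 + g) * d * d"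
    unfolding d(2) by (simp add: algebra_simps power2_eq_square)
  moreover have "0 < 2 * k * (n + k) * (1 - g) * t * t"
    using assms by (intro mult_pos_pos) auto
  moreover have "4 * k * g \<le> 2 * (1 + g) * (n + k)"
  proof -
    have "4 * k * g \<le> 4 * k * 1"
      using assms by (intro mult_left_mono) auto
    also have "\<dots> \<le> 2 * 1 * (n + k)"
      using assms by simp
    also have "\<dots> \<le> 2 * (1 + g) * (n + k)"
      using assms by (intro mult_right_mono) auto
    finally show ?thesis .
  qed
  then have "0 \<le> d * t * (2 * (1 + g) * (n + k) - 4 * k * g)"
    using d assms by (intro mult_nonneg_nonneg) auto
  moreover have "0 \<le> (1 + g) * d * d"
    using d assms by (intro mult_nonneg_nonneg) auto
  ultimately show False
    using assms(6) by linarith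
qed

text \<open>The hypothesis \<open>nonneg_zero\<close> says \<open>\<omega>_{n,k} \<ge> 0\<close>; stated this way it also ensures
  that the zero set whose \<open>Max\<close> defines \<open>omega\<close> is nonempty.\<close>
locale cheb_omega_nonneg =
  fixes n k :: nat
  assumes one_le_k: "1 \<le> k" and n_ge: "k + 2 \<le> n"
    and nonneg_zero: "\<exists>x\<ge>0. poly (cheb_deriv n (Suc k)) x = 0"
begin

abbreviation P :: "real poly" where "P \<equiv> cheb_deriv n k"
abbreviation P' :: "real poly" where "P' \<equiv> cheb_deriv n (Suc k)"
abbreviation P'' :: "real poly" where "P'' \<equiv> cheb_deriv n (Suc (Suc k))"
abbreviation \<omega> :: real where "\<omega> \<equiv> omega n k"
abbreviation N :: real where "N \<equiv> (real n)\<^sup>2 - (real k)\<^sup>2"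

lemma N_pos: "0 < N"
  using one_le_k n_ge by (simp add: power_strict_mono)

lemma ode: "(1 - x * x) * poly P'' x = (2 * real k + 1) * x * poly P' x - N * poly P x"
  by (rule poly_cheb_deriv_ode)

lemma P_1_pos: "0 < poly P 1"
  using n_ge by (intro poly_cheb_deriv_1_pos) simp

lemma P'_1_pos: "0 < poly P' 1"
  using n_ge by (intro poly_cheb_deriv_1_pos) simp

lemma omega_zero: "poly P' \<omega> = 0"
  and zero_le_omega: "poly P' x = 0 \<Longrightarrow> x \<le> \<omega>"
  and omega_nonneg: "0 \<le> \<omega>"
  using nonneg_zero omega_largest_zero[of k n] n_ge by (auto intro: order.trans)

lemma omega_less_1: "\<omega> < 1"
  using omega_zero poly_cheb_deriv_pos[of "Suc k" n \<omega>] n_ge by force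

lemma P'_pos: "\<omega> < x \<Longrightarrow> 0 < poly P' x"
proof (rule ccontr)
  assume "\<omega> < x" "\<not> 0 < poly P' x"
  moreover have "poly P' x \<noteq> 0"
    using zero_le_omega \<open>\<omega> < x\<close> by force
  ultimately have "poly P' x < 0" by simp
  moreover have "x < 1"
    using \<open>\<not> 0 < poly P' x\<close> poly_cheb_deriv_pos[of "Suc k" n x] n_ge by force
  ultimately obtain y where "x < y" "poly P' y = 0"
    using poly_IVT_pos[of x 1 P'] P'_1_pos by auto
  with zero_le_omega \<open>\<omega> < x\<close> show False by force
qed

lemma P'_nonneg: "\<omega> \<le> x \<Longrightarrow> 0 \<le> poly P' x"
  using P'_pos omega_zero by (cases "x = \<omega>") (auto intro: less_imp_le)

lemma P_strict_mono: "\<omega> \<le> a \<Longrightarrow> a < b \<Longrightarrow> poly P a < poly P b"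
  by (intro poly_strict_mono_if_pderiv_pos) (auto simp: cheb_deriv_Suc[symmetric] intro: P'_pos)

lemma P_omega_neg: "poly P \<omega> < 0"
proof -
  have \<omega>_sq: "\<omega> * \<omega> < 1"
    using mult_strict_mono'[OF omega_less_1 omega_less_1 omega_nonneg omega_nonneg] by simp
  have "poly P \<omega> \<noteq> 0"
    using cheb_deriv_no_common_zero[OF \<omega>_sq _ _ omega_zero] n_ge by auto
  moreover have "\<not> 0 < poly P \<omega>"
  proof
    assume "0 < poly P \<omega>"
    then have "(1 - \<omega> * \<omega>) * poly P'' \<omega> < 0"
      using ode[of \<omega>] omega_zero N_pos by simp
    with \<omega>_sq have "poly P'' \<omega> < 0"
      by (simp add: mult_less_0_iff)
    moreover have "DERIV (poly P') \<omega> :> poly P'' \<omega>"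
      using poly_DERIV[of P' \<omega>] by (simp add: cheb_deriv_Suc)
    ultimately obtain d where "0 < d" "\<And>h. 0 < h \<Longrightarrow> h < d \<Longrightarrow> poly P' (\<omega> + h) < poly P' \<omega>"
      using DERIV_neg_dec_right by blast
    then have "poly P' (\<omega> + d / 2) < 0"
      using omega_zero by fastforce
    with P'_pos[of "\<omega> + d / 2"] \<open>0 < d\<close> show False by simp
  qed
  ultimately show ?thesis by simp
qed

lemma tau_eq: "tau n k = - poly P \<omega> / poly P 1"
  using P_omega_neg by (simp add: tau_def)

lemma crossing_exists:
  obtains g where "\<omega> < g" "g < 1" "poly P g = g * poly P \<omega>"
proof -
  have "poly (P - smult (poly P \<omega>) X) \<omega> < 0"
    using P_omega_neg omega_less_1 omega_nonneg
    by (simp add: algebra_simps mult_less_cancel_right1 mult_le_one)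
  moreover have "0 < poly (P - smult (poly P \<omega>) X) 1"
    using P_omega_neg P_1_pos by simp
  ultimately obtain g where "\<omega> < g" "g < 1" "poly (P - smult (poly P \<omega>) X) g = 0"
    using poly_IVT_pos[OF omega_less_1] by blast
  then show ?thesis
    using that by (simp add: algebra_simps)
qed

lemma P''_pos:
  assumes "\<omega> \<le> x" "x < 1" "poly P x < 0"
  shows "0 < poly P'' x"
proof -
  have "0 \<le> (2 * real k + 1) * x * poly P' x"
    using assms(1) omega_nonneg P'_nonneg[OF assms(1)] by simp
  moreover have "N * poly P x < 0"
    using N_pos assms(3) by (rule mult_pos_neg)
  ultimately have "0 < (1 - x * x) * poly P'' x"
    using ode[of x] by linarith
  moreover have "x * x < 1"
    using mult_strict_mono'[OF assms(2) assms(2)] assms(1) omega_nonneg by simp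
  ultimately show ?thesis
    by (simp add: zero_less_mult_iff)
qed

definition energy :: "real \<Rightarrow> real poly" where
  "energy c = smult N (P * P) + [:1, 0, -1:] * (P' * P') - smult c P"

lemma poly_pderiv_energy: "poly (pderiv (energy c)) x = poly P' x * (4 * real k * x * poly P' x - c)"
proof -
  have "poly (pderiv (energy c)) x =
      2 * poly P' x * (N * poly P x + (1 - x * x) * poly P'' x) - 2 * x * poly P' x * poly P' x
        - c * poly P' x"
    by (simp only: energy_def pderiv_diff pderiv_add pderiv_smult poly_diff poly_add poly_smult
        poly_pderiv_one_minus_sq_mult)
      (simp add: pderiv_mult cheb_deriv_Suc[symmetric] algebra_simps)
  also have "N * poly P x + (1 - x * x) * poly P'' x = (2 * real k + 1) * x * poly P' x"
    using ode[of x] by simp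
  finally show ?thesis
    by (simp add: algebra_simps)
qed

lemma P'_le_at_crossing:
  assumes g: "\<omega> < g" "g < 1" "poly P g = g * poly P \<omega>" and x: "\<omega> \<le> x" "x \<le> g"
  shows "poly P' x \<le> poly P' g"
proof -
  have P_neg: "poly P y < 0" if "\<omega> \<le> y" "y \<le> g" for y
  proof -
    have "poly P y \<le> poly P g"
      using P_strict_mono[OF that(1)] that(2) by (cases "y = g") (auto intro: less_imp_le)
    moreover have "g * poly P \<omega> < 0"
      using g(1) omega_nonneg P_omega_neg by (intro mult_pos_neg) auto
    ultimately show ?thesis
      using g(3) by linarith
  qed
  show ?thesis
    using x g(2) P''_pos P_neg
    by (intro poly_mono_if_pderiv_nonneg[OF x(2)]) (auto simp: cheb_deriv_Suc[symmetric] intro: less_imp_le)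
qed

lemma energy_at_crossing_le:
  assumes g: "\<omega> < g" "g < 1" "poly P g = g * poly P \<omega>"
  defines "c \<equiv> 4 * real k * g * poly P' g"
  shows "poly (energy c) g \<le> poly (energy c) \<omega>"
proof -
  have "poly (- energy c) \<omega> \<le> poly (- energy c) g"
  proof (rule poly_mono_if_pderiv_nonneg)
    fix x assume x: "\<omega> \<le> x" "x \<le> g"
    have "x * poly P' x \<le> g * poly P' g"
      using x omega_nonneg P'_nonneg[OF x(1)] P'_le_at_crossing[OF g x] by (intro mult_mono) auto
    then have "4 * real k * x * poly P' x - c \<le> 0"
      using mult_left_mono[of "x * poly P' x" "g * poly P' g" "4 * real k"] unfolding c_def
      by (simp add: algebra_simps)
    with P'_nonneg[OF x(1)] have "poly P' x * (4 * real k * x * poly P' x - c) \<le> 0"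
      by (rule mult_nonneg_nonpos)
    then show "0 \<le> poly (pderiv (- energy c)) x"
      by (simp add: pderiv_minus poly_pderiv_energy)
  qed (use g in simp)
  then show ?thesis by simp
qed

lemma P'_at_crossing_less:
  assumes g: "\<omega> < g" "g < 1" "poly P g = g * poly P \<omega>"
  shows "poly P' g < (real n + real k) * - poly P \<omega>"
proof -
  define t where "t = - poly P \<omega>"
  define w where "w = poly P' g"
  have t: "0 < t" and g_pos: "0 < g"
    using P_omega_neg omega_nonneg g unfolding t_def by auto
  have "poly (energy (4 * real k * g * w)) g =
      N * (g * t) * (g * t) + (1 - g * g) * w * w + 4 * real k * g * w * g * t"
    using g(3) unfolding energy_def w_def t_def by (simp add: algebra_simps)
  moreover have "poly (energy (4 * real k * g * w)) \<omega> = N * t * t + 4 * real k * g * w * t"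
    using omega_zero unfolding energy_def t_def by (simp add: algebra_simps)
  ultimately have "(1 - g) * ((1 + g) * w\<^sup>2 - N * (1 + g) * t\<^sup>2) \<le> (1 - g) * (4 * real k * g * w * t)"
    using energy_at_crossing_le[OF g] unfolding w_def[symmetric]
    by (simp add: algebra_simps power2_eq_square)
  then have "(1 + g) * w\<^sup>2 - N * (1 + g) * t\<^sup>2 \<le> 4 * real k * g * w * t"
    using g(2) by simp
  then show ?thesis
    unfolding w_def[symmetric] t_def[symmetric]
    using one_le_k n_ge g_pos g(2) t by (intro energy_estimate_imp_less) auto
qed

abbreviation Q :: "real poly" where "Q \<equiv> cheb_deriv (Suc n) k"
abbreviation Q' :: "real poly" where "Q' \<equiv> cheb_deriv (Suc n) (Suc k)"

lemma n_pos: "0 < real n"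
  using n_ge by simp

lemma poly_Q'_eq: "real n * poly Q' x = (real n + 1) * (x * poly P' x + (real n + real k) * poly P x)"
  using arg_cong[OF cheb_deriv_shift_deriv[of n k], of "\<lambda>p. poly p x"] by simp

lemma poly_Q_eq:
  "real n * (real n + 1 - real k) * poly Q x = real n * x * poly Q' x - (real n + 1) * poly P' x"
  using arg_cong[OF cheb_deriv_shift[of n k], of "\<lambda>p. poly p x"] by simp

lemma Q'_zero_beyond_crossing:
  assumes g: "\<omega> < g" "g < 1" "poly P g = g * poly P \<omega>"
  obtains r where "g < r" "r < 1" "poly Q' r = 0"
proof -
  define V where "V = X * P' + smult (real n + real k) P"
  have "poly V g = g * (poly P' g - (real n + real k) * - poly P \<omega>)"
    unfolding V_def using g(3) by (simp add: algebra_simps)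
  moreover have "0 < g"
    using g(1) omega_nonneg by simp
  ultimately have "poly V g < 0"
    using P'_at_crossing_less[OF g] by (simp add: mult_pos_neg)
  moreover have "0 < poly V 1"
  proof -
    have "0 < (real n + real k) * poly P 1"
      using n_pos P_1_pos by (intro mult_pos_pos) auto
    with P'_1_pos show ?thesis
      unfolding V_def by simp
  qed
  ultimately obtain r where r: "g < r" "r < 1" "poly V r = 0"
    using poly_IVT_pos[OF g(2)] by blast
  have "real n * poly Q' r = (real n + 1) * poly V r"
    unfolding poly_Q'_eq V_def by simp
  with r(3) n_pos have "poly Q' r = 0"
    by simp
  with r that show ?thesis by blast
qed

lemma cheb_omega_nonneg_Suc: "cheb_omega_nonneg (Suc n) k"
proof
  obtain g where "\<omega> < g" "g < 1" "poly P g = g * poly P \<omega>"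
    by (rule crossing_exists)
  moreover from this obtain r where "g < r" "poly Q' r = 0"
    by (rule Q'_zero_beyond_crossing)
  ultimately show "\<exists>x\<ge>0. poly Q' x = 0"
    using omega_nonneg by (intro exI[of _ r]) auto
qed (use one_le_k n_ge in auto)

lemma ratio_at_zero_of_Q':
  assumes \<beta>: "\<omega> < \<beta>" "poly Q' \<beta> = 0"
  shows "\<bar>poly Q \<beta>\<bar> / poly Q 1 = - poly P \<beta> / (\<beta> * poly P 1)"
proof -
  define S where "S = real n + real k"
  define K where "K = real n * (real n + 1 - real k)"
  define C where "C = (real n + 1) * S"
  have S_pos: "0 < S" and K_pos: "0 < K" and C_pos: "0 < C" and \<beta>_pos: "0 < \<beta>"
    using n_ge omega_nonneg \<beta>(1) unfolding S_def K_def C_def by auto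
  have "(real n + 1) * (\<beta> * poly P' \<beta> + S * poly P \<beta>) = 0"
    using poly_Q'_eq[of \<beta>] \<beta>(2) unfolding S_def by simp
  then have P_\<beta>: "S * poly P \<beta> = - \<beta> * poly P' \<beta>"
    by (simp add: add_eq_0_iff2 add_pos_nonneg)
  then have "S * poly P \<beta> < 0"
    using \<beta>_pos P'_pos[OF \<beta>(1)] by simp
  then have P_\<beta>_neg: "poly P \<beta> < 0"
    using S_pos by (simp add: mult_less_0_iff)
  have "K * poly Q \<beta> = - ((real n + 1) * poly P' \<beta>)"
    using poly_Q_eq[of \<beta>] \<beta>(2) unfolding K_def by simp
  also have "poly P' \<beta> = - S * poly P \<beta> / \<beta>"
    using P_\<beta> \<beta>_pos by (simp add: field_simps)
  finally have KQ_\<beta>: "K * poly Q \<beta> = C * poly P \<beta> / \<beta>"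
    unfolding C_def by simp
  have KQ_1: "K * poly Q 1 = C * poly P 1"
    using poly_Q_eq[of 1] poly_Q'_eq[of 1] unfolding K_def C_def S_def by (simp add: algebra_simps)
  have "\<bar>poly Q \<beta>\<bar> / poly Q 1 = \<bar>K * poly Q \<beta>\<bar> / (K * poly Q 1)"
    using K_pos by (simp add: abs_mult)
  also have "\<dots> = C * - poly P \<beta> / \<beta> / (C * poly P 1)"
    unfolding KQ_\<beta> KQ_1 using C_pos \<beta>_pos P_\<beta>_neg by (simp add: abs_mult abs_div)
  also have "\<dots> = - poly P \<beta> / (\<beta> * poly P 1)"
    using C_pos \<beta>_pos P_1_pos by (simp add: field_simps)
  finally show ?thesis .
qed

lemma tau_Suc_less: "tau (Suc n) k < tau n k"
proof -
  obtain g where g: "\<omega> < g" "g < 1" "poly P g = g * poly P \<omega>"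
    by (rule crossing_exists)
  then obtain r where r: "g < r" "poly Q' r = 0"
    by (rule Q'_zero_beyond_crossing)
  define \<beta> where "\<beta> = omega (Suc n) k"
  have \<beta>: "poly Q' \<beta> = 0" "r \<le> \<beta>"
    using omega_largest_zero[of k "Suc n" r] r(2) n_ge unfolding \<beta>_def by auto
  have "g * poly P \<omega> < poly P \<beta>"
    using P_strict_mono[of g \<beta>] g r \<beta>(2) by simp
  moreover have "\<beta> * poly P \<omega> < g * poly P \<omega>"
    using g r \<beta>(2) P_omega_neg by (simp add: mult_strict_right_mono_neg)
  moreover have "0 < \<beta>"
    using g(1) r(1) \<beta>(2) omega_nonneg by simp
  ultimately have "poly P \<omega> < poly P \<beta> / \<beta>"
    by (simp add: pos_less_divide_eq mult.commute)
  then have "- poly P \<beta> / \<beta> < - poly P \<omega>"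
    by simp
  then have "- poly P \<beta> / (\<beta> * poly P 1) < - poly P \<omega> / poly P 1"
    using P_1_pos by (simp add: divide_strict_right_mono flip: divide_divide_eq_left)
  moreover have "tau (Suc n) k = - poly P \<beta> / (\<beta> * poly P 1)"
    using ratio_at_zero_of_Q'[of \<beta>] g r \<beta> unfolding tau_def \<beta>_def by simp
  ultimately show ?thesis
    unfolding tau_eq by simp
qed

end

lemma cheb_omega_nonneg_start: "1 \<le> k \<Longrightarrow> cheb_omega_nonneg (k + 2) k"
  using poly_cheb_deriv_penultimate_at_0[of k] by unfold_locales auto

lemma cheb_omega_nonneg_all:
  assumes "1 \<le> k" "k + 2 \<le> n"
  shows "cheb_omega_nonneg n k"
  using assms(2)
proof (induction n rule: dec_induct)
  case base
  from assms(1) show ?case by (rule cheb_omega_nonneg_start)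
next
  case (step n)
  from step.IH show ?case by (rule cheb_omega_nonneg.cheb_omega_nonneg_Suc)
qed

theorem theorem1p1:
  fixes k :: nat
  assumes "k \<ge> 1"
  shows "(\<forall>n. n \<ge> k + 2 \<longrightarrow> tau (Suc n) k < tau n k)
       \<and> (\<forall>m n. m \<ge> 2 \<longrightarrow> n \<ge> k + m \<longrightarrow> tau n k \<le> tau (k + m) k)"
proof -
  have decreasing: "tau (Suc n) k < tau n k" if "k + 2 \<le> n" for n
    using cheb_omega_nonneg_all[OF assms that] by (rule cheb_omega_nonneg.tau_Suc_less)
  have "tau n k \<le> tau (k + m) k" if "2 \<le> m" "k + m \<le> n" for m n
    using that(2)
  proof (induction n rule: dec_induct)
    case (step n)
    with decreasing[of n] that(1) show ?case by simp
  qed simp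
  with decreasing show ?thesis by blast
qed

end
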